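(* Let $f:(N,F,\{F_\sigma\})\to(N',F',\{F'_\tau\})$ be a morphism of KM fans, $\sigma\in F$, $\tau\in F'$ a cone containing $f_{\mathbb R}(\sigma)$, and $L'\subseteq N'$ a lifting of $F'_\tau$. (1) There exists a lifting $L\subseteq N$ of $F_\sigma$ with $f(L)\subseteq L'$. (2) If $f$ is injective on torsion subgroups $N_{\rm tor}\to N'_{\rm tor}$ (equivalently $\operatorname{Ker}f$ is torsion-free) and $f|_{F_\sigma}:F_\sigma\to F'_\tau$ is bijective, then the map $(N/F_\sigma)_{\rm tor}\to(N'/F'_\tau)_{\rm tor}$ induced by $f$ is injective. (3) If $(N/F_\sigma)_{\rm tor}\to(N'/F'_\tau)_{\rm tor}$ is injective, then $L:=f^{-1}(L')$ is a lifting of $F_\sigma$, and for this $L$ the induced map of finite groups $N/L\to N'/L'$ is injective. (4) If there is a lifting $L$ of $F_\sigma$ with $f(L)\subseteq L'$ and $N/L\to N'/L'$ injective, then $(N/F_\sigma)_{\rm tor}\to(N'/F'_\tau)_{\rm tor}$ is injective.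
   Context: For a finitely generated abelian group $N$, $N_{\mathbb R}=N\otimes\mathbb R$ and $N_{\rm tor}$ is its torsion subgroup; for a subgroup $A\subseteq N$ and $\sigma\subseteq N_{\mathbb R}$, $A\cap\sigma$ means elements of $A$ whose image lies in $\sigma$. A KM fan $(N,F,\{F_\sigma\})$: a finitely generated abelian group $N$, a fan $F$ in $N_{\mathbb R}$ (finite nonempty set of sharp cones generated by images of elements of $N$, closed under faces, pairwise meeting in common faces), and for each $\sigma\in F$ a torsion-free subgroup $F_\sigma$ of finite index in $N\cap\operatorname{Span}\sigma$, with $F_\tau=F_\sigma\cap\operatorname{Span}\tau$ for faces $\tau\le\sigma$. A morphism is a homomorphism $f:N\to N'$ such that for every $\sigma\in F$ some $\tau\in F'$ has $f_{\mathbb R}(\sigma)\subseteq\tau$ and $f(F_\sigma)\subseteq F'_\tau$. A lifting of the lattice datum $F_\sigma$ is a torsion-free subgroup $L\subseteq N$ with $N/L$ finite and $F_\sigma=L\cap\operatorname{Span}\sigma$. *)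

theory Defs
  imports "HOL-Analysis.Analysis"
begin

fun zmult :: "nat \<Rightarrow> 'a::ab_group_add \<Rightarrow> 'a" where
  "zmult 0 x = 0"
| "zmult (Suc n) x = x + zmult n x"

definition zmul :: "int \<Rightarrow> 'a::ab_group_add \<Rightarrow> 'a" where
  "zmul k x = (if k \<ge> 0 then zmult (nat k) x else - zmult (nat (- k)) x)"

inductive_set zgen :: "'a::ab_group_add set \<Rightarrow> 'a set" for G where
  zgen_zero: "0 \<in> zgen G"
| zgen_gen: "g \<in> G \<Longrightarrow> g \<in> zgen G"
| zgen_add: "a \<in> zgen G \<Longrightarrow> b \<in> zgen G \<Longrightarrow> a + b \<in> zgen G"
| zgen_neg: "a \<in> zgen G \<Longrightarrow> - a \<in> zgen G"

text \<open>The ambient group N is the whole type.\<close>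
definition fin_gen_group :: "'a::ab_group_add itself \<Rightarrow> bool" where
  "fin_gen_group _ \<longleftrightarrow> (\<exists>G::'a set. finite G \<and> zgen G = UNIV)"

definition zsubgroup :: "'a::ab_group_add set \<Rightarrow> bool" where
  "zsubgroup A \<longleftrightarrow> 0 \<in> A \<and> (\<forall>x\<in>A. \<forall>y\<in>A. x + y \<in> A) \<and> (\<forall>x\<in>A. - x \<in> A)"

definition torsion_free :: "'a::ab_group_add set \<Rightarrow> bool" where
  "torsion_free A \<longleftrightarrow> (\<forall>x\<in>A. \<forall>n>0. zmult n x = 0 \<longrightarrow> x = 0)"

definition torsion_part :: "'a::ab_group_add set" where
  "torsion_part = {x. \<exists>n>0. zmult n x = 0}"

definition cosets_in :: "'a::ab_group_add set \<Rightarrow> 'a set \<Rightarrow> 'a set set" where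
  "cosets_in B A = {(+) x ` A | x. x \<in> B}"

text \<open>Preimages of the torsion subgroup of N/A.\<close>
definition tor_mod :: "'a::ab_group_add set \<Rightarrow> 'a set" where
  "tor_mod A = {x. \<exists>n>0. zmult n x \<in> A}"

text \<open>rho : N \<rightarrow> V realises N_R as the real span of its image: rho is additive and
 integrally independent (modulo torsion) elements are sent to linearly independent vectors.
 N_R is then span (range rho).\<close>
definition realification :: "('a::ab_group_add \<Rightarrow> 'v::real_vector) \<Rightarrow> bool" where
  "realification \<rho> \<longleftrightarrow> Modules.additive \<rho> \<and>
     (\<forall>S. finite S \<and> inj_on \<rho> S \<and> dependent (\<rho> ` S) \<longrightarrow>
        (\<exists>c::'a \<Rightarrow> int. (\<exists>x\<in>S. c x \<noteq> 0) \<and> (\<Sum>x\<in>S. zmul (c x) x) \<in> torsion_part))"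

definition in_N :: "('a \<Rightarrow> 'v) \<Rightarrow> 'v set \<Rightarrow> 'a set" where
  "in_N \<rho> X = {x. \<rho> x \<in> X}"

definition gen_cone :: "'v::real_vector set \<Rightarrow> 'v set" where
  "gen_cone S = {(\<Sum>s\<in>S. c s *\<^sub>R s) | c. \<forall>s\<in>S. c s \<ge> 0}"

definition sharp :: "'v::real_vector set \<Rightarrow> bool" where
  "sharp \<sigma> \<longleftrightarrow> \<sigma> \<inter> uminus ` \<sigma> = {0}"

definition rat_cone :: "('a \<Rightarrow> 'v::real_vector) \<Rightarrow> 'v set \<Rightarrow> bool" where
  "rat_cone \<rho> \<sigma> \<longleftrightarrow> (\<exists>S. finite S \<and> \<sigma> = gen_cone (\<rho> ` S)) \<and> sharp \<sigma>"

definition is_face :: "'v::real_vector set \<Rightarrow> 'v set \<Rightarrow> bool" where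
  "is_face \<tau> \<sigma> \<longleftrightarrow> \<tau> face_of \<sigma> \<and> \<tau> \<noteq> {}"

definition is_fan :: "('a \<Rightarrow> 'v::real_vector) \<Rightarrow> 'v set set \<Rightarrow> bool" where
  "is_fan \<rho> F \<longleftrightarrow> finite F \<and> F \<noteq> {} \<and> (\<forall>\<sigma>\<in>F. rat_cone \<rho> \<sigma>) \<and>
     (\<forall>\<sigma>\<in>F. \<forall>\<tau>. is_face \<tau> \<sigma> \<longrightarrow> \<tau> \<in> F) \<and>
     (\<forall>\<sigma>\<in>F. \<forall>\<sigma>'\<in>F. is_face (\<sigma> \<inter> \<sigma>') \<sigma> \<and> is_face (\<sigma> \<inter> \<sigma>') \<sigma>')"

definition km_fan :: "('a::ab_group_add \<Rightarrow> 'v::real_vector) \<Rightarrow> 'v set set \<Rightarrow> ('v set \<Rightarrow> 'a set) \<Rightarrow> bool" where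
  "km_fan \<rho> F Fl \<longleftrightarrow> fin_gen_group TYPE('a) \<and> realification \<rho> \<and> is_fan \<rho> F \<and>
     (\<forall>\<sigma>\<in>F. zsubgroup (Fl \<sigma>) \<and> torsion_free (Fl \<sigma>) \<and> Fl \<sigma> \<subseteq> in_N \<rho> (span \<sigma>) \<and>
              finite (cosets_in (in_N \<rho> (span \<sigma>)) (Fl \<sigma>))) \<and>
     (\<forall>\<sigma>\<in>F. \<forall>\<tau>\<in>F. is_face \<tau> \<sigma> \<longrightarrow> Fl \<tau> = Fl \<sigma> \<inter> in_N \<rho> (span \<tau>))"

text \<open>fR is the real linear extension f_R of f (unique on N_R = span (range rho)).\<close>
definition km_morphism ::
  "('a::ab_group_add \<Rightarrow> 'v::real_vector) \<Rightarrow> 'v set set \<Rightarrow> ('v set \<Rightarrow> 'a set) \<Rightarrow>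
   ('b::ab_group_add \<Rightarrow> 'w::real_vector) \<Rightarrow> 'w set set \<Rightarrow> ('w set \<Rightarrow> 'b set) \<Rightarrow>
   ('a \<Rightarrow> 'b) \<Rightarrow> ('v \<Rightarrow> 'w) \<Rightarrow> bool" where
  "km_morphism \<rho> F Fl \<rho>' F' Fl' f fR \<longleftrightarrow> Modules.additive f \<and> linear fR \<and> (\<forall>x. fR (\<rho> x) = \<rho>' (f x)) \<and>
     (\<forall>\<sigma>\<in>F. \<exists>\<tau>\<in>F'. fR ` \<sigma> \<subseteq> \<tau> \<and> f ` (Fl \<sigma>) \<subseteq> Fl' \<tau>)"

definition lifting :: "('a::ab_group_add \<Rightarrow> 'v::real_vector) \<Rightarrow> ('v set \<Rightarrow> 'a set) \<Rightarrow> 'v set \<Rightarrow> 'a set \<Rightarrow> bool" where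
  "lifting \<rho> Fl \<sigma> L \<longleftrightarrow> zsubgroup L \<and> torsion_free L \<and> finite (cosets_in UNIV L) \<and>
     Fl \<sigma> = L \<inter> in_N \<rho> (span \<sigma>)"

text \<open>Injectivity of the induced map (N/A)_tor \<rightarrow> (N'/B)_tor, x + A \<mapsto> f x + B.\<close>
definition tor_quot_inj :: "('a::ab_group_add \<Rightarrow> 'b::ab_group_add) \<Rightarrow> 'a set \<Rightarrow> 'b set \<Rightarrow> bool" where
  "tor_quot_inj f A B \<longleftrightarrow> (\<forall>x\<in>tor_mod A. \<forall>y\<in>tor_mod A. f x - f y \<in> B \<longrightarrow> x - y \<in> A)"

definition quot_inj :: "('a::ab_group_add \<Rightarrow> 'b::ab_group_add) \<Rightarrow> 'a set \<Rightarrow> 'b set \<Rightarrow> bool" where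
  "quot_inj f A B \<longleftrightarrow> (\<forall>x y. f x - f y \<in> B \<longrightarrow> x - y \<in> A)"

end

theory Submission
  imports Defs
begin

text \<open>Put \<open>S = N \<inter> span \<sigma>\<close>; it is a saturated subgroup of \<open>N\<close> containing \<open>F\<^sub>\<sigma>\<close> with finite index,
  so \<open>(N/F\<^sub>\<sigma>)\<^sub>t\<^sub>o\<^sub>r = S/F\<^sub>\<sigma>\<close>, and liftings of \<open>F\<^sub>\<sigma>\<close> are exactly the finite-index subgroups \<open>L\<close> with
  \<open>L \<inter> S = F\<^sub>\<sigma>\<close> (torsion-freeness is then automatic, as all torsion lies in \<open>S\<close>).
  If \<open>m > 0\<close> kills both \<open>S/F\<^sub>\<sigma>\<close> and \<open>N'/L'\<close> then \<open>L = F\<^sub>\<sigma> + mN\<close> is such a lifting with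
  \<open>f(L) \<subseteq> L'\<close>; finiteness of \<open>N/L\<close> uses that \<open>N\<close> is finitely generated. The remaining parts are
  diagram chases in \<open>S/F\<^sub>\<sigma> \<rightarrow> N'/F'\<^sub>\<tau>\<close>, using \<open>F'\<^sub>\<tau> = L' \<inter> S'\<close>.\<close>

lemma zmult_add: "zmult (m + n) x = zmult m x + zmult n x"
  by (induction m) (auto simp: add.assoc)

lemma zmult_mult: "zmult (m * n) x = zmult m (zmult n x)"
  by (induction m) (auto simp: zmult_add)

lemma zmult_plus: "zmult n (x + y) = zmult n x + zmult n y"
  by (induction n) (auto simp: algebra_simps)

lemma zmult_zero [simp]: "zmult n 0 = 0"
  by (induction n) auto

lemma zmult_minus: "zmult n (- x) = - zmult n x"
  by (induction n) (auto simp: algebra_simps)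

lemma zmult_diff: "zmult n (x - y) = zmult n x - zmult n y"
  using zmult_plus[of n x "- y"] by (simp add: zmult_minus)

lemma additive_zmult: "Modules.additive f \<Longrightarrow> f (zmult n x) = zmult n (f x)"
  by (induction n) (auto simp: additive.add additive.zero)

lemma additive_zmult_scaleR:
  "Modules.additive (\<rho> :: 'a::ab_group_add \<Rightarrow> 'v::real_vector) \<Longrightarrow> \<rho> (zmult n x) = real n *\<^sub>R \<rho> x"
  by (induction n) (auto simp: additive.add additive.zero algebra_simps)

lemma zsubgroup_zero: "zsubgroup A \<Longrightarrow> 0 \<in> A"
  by (simp add: zsubgroup_def)

lemma zsubgroup_add: "zsubgroup A \<Longrightarrow> x \<in> A \<Longrightarrow> y \<in> A \<Longrightarrow> x + y \<in> A"
  by (simp add: zsubgroup_def)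

lemma zsubgroup_minus: "zsubgroup A \<Longrightarrow> x \<in> A \<Longrightarrow> - x \<in> A"
  by (simp add: zsubgroup_def)

lemma zsubgroup_diff: "zsubgroup A \<Longrightarrow> x \<in> A \<Longrightarrow> y \<in> A \<Longrightarrow> x - y \<in> A"
  by (metis diff_conv_add_uminus zsubgroup_add zsubgroup_minus)

lemma zsubgroup_zmult: "zsubgroup A \<Longrightarrow> x \<in> A \<Longrightarrow> zmult n x \<in> A"
  by (induction n) (auto simp: zsubgroup_zero zsubgroup_add)

lemma zsubgroup_sum: "zsubgroup A \<Longrightarrow> (\<And>i. i \<in> I \<Longrightarrow> g i \<in> A) \<Longrightarrow> sum g I \<in> A"
  by (induction I rule: infinite_finite_induct) (auto simp: zsubgroup_zero zsubgroup_add)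

lemma zsubgroup_UNIV: "zsubgroup UNIV"
  by (simp add: zsubgroup_def)

lemma zsubgroup_vimage: "Modules.additive f \<Longrightarrow> zsubgroup B \<Longrightarrow> zsubgroup (f -` B)"
  by (simp add: zsubgroup_def additive.zero additive.add additive.minus)

lemma coset_eq_iff:
  assumes "zsubgroup A"
  shows "(+) a ` A = (+) b ` A \<longleftrightarrow> a - b \<in> A"
proof
  assume eq: "(+) a ` A = (+) b ` A"
  have "a \<in> (+) a ` A" using zsubgroup_zero[OF assms] by force
  then obtain c where "c \<in> A" "a = b + c" using eq by auto
  then show "a - b \<in> A" by simp
next
  have sub: "(+) a ` A \<subseteq> (+) b ` A" if "a - b \<in> A" for a b
  proof
    fix y assume "y \<in> (+) a ` A"
    then obtain c where c: "c \<in> A" "y = a + c" by auto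
    then have "(a - b) + c \<in> A" "y = b + ((a - b) + c)"
      using zsubgroup_add[OF assms that] by simp_all
    then show "y \<in> (+) b ` A" by blast
  qed
  assume "a - b \<in> A"
  moreover from this have "b - a \<in> A" using zsubgroup_minus[OF assms, of "a - b"] by simp
  ultimately show "(+) a ` A = (+) b ` A" using sub by blast
qed

lemma bounded_multiple_in_finite_index:
  assumes A: "zsubgroup A" and fin: "finite (cosets_in B A)" and B: "zsubgroup B" "x \<in> B"
  shows "\<exists>k>0. k \<le> card (cosets_in B A) \<and> zmult k x \<in> A"
proof -
  let ?n = "card (cosets_in B A)"
  let ?coset = "\<lambda>i. (+) (zmult i x) ` A"
  have sub: "?coset ` {0..?n} \<subseteq> cosets_in B A"
    using zsubgroup_zmult[OF B] unfolding cosets_in_def by blast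
  have "\<not> inj_on ?coset {0..?n}"
  proof
    assume "inj_on ?coset {0..?n}"
    from card_inj_on_le[OF this sub fin] show False by simp
  qed
  then obtain i j where ij: "i \<in> {0..?n}" "j \<in> {0..?n}" "i < j" "?coset i = ?coset j"
    unfolding inj_on_def by (metis linorder_neqE_nat)
  have "zmult j x - zmult i x \<in> A" using ij(4) coset_eq_iff[OF A] by metis
  moreover have "zmult j x = zmult (j - i) x + zmult i x"
    using ij(3) zmult_add[of "j - i" i x] by simp
  ultimately show ?thesis using ij by (intro exI[of _ "j - i"]) auto
qed

text \<open>Every class has order at most \<open>n = card (B/A)\<close>, so \<open>n!\<close> is a common exponent.\<close>

lemma finite_index_uniform_exponent:
  assumes A: "zsubgroup A" and fin: "finite (cosets_in B A)" and B: "zsubgroup B"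
  shows "\<exists>m>0. \<forall>x\<in>B. zmult m x \<in> A"
proof (intro exI[of _ "fact (card (cosets_in B A))"] conjI ballI)
  fix x assume "x \<in> B"
  then obtain k where k: "k > 0" "k \<le> card (cosets_in B A)" "zmult k x \<in> A"
    using bounded_multiple_in_finite_index[OF A fin B] by blast
  then have "k dvd fact (card (cosets_in B A))" by (simp add: dvd_fact)
  then obtain j where "fact (card (cosets_in B A)) = j * k"
    by (metis dvd_def mult.commute)
  then show "zmult (fact (card (cosets_in B A))) x \<in> A"
    using zsubgroup_zmult[OF A k(3)] by (simp add: zmult_mult)
qed simp

lemma zgen_sum_rep:
  assumes G: "finite G" and x: "x \<in> zgen G"
  shows "\<exists>p q. x = (\<Sum>g\<in>G. zmult (p g) g) - (\<Sum>g\<in>G. zmult (q g) g)"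
  using x
proof induction
  case zgen_zero
  show ?case by (intro exI[of _ "\<lambda>_. 0"]) simp
next
  case (zgen_gen g)
  have "(\<Sum>h\<in>G. zmult (if h = g then 1 else 0) h) = (\<Sum>h\<in>G. if h = g then h else 0)"
    by (rule sum.cong) auto
  also have "\<dots> = g" using zgen_gen G by simp
  finally show ?case
    by (intro exI[of _ "\<lambda>h. if h = g then 1 else 0"] exI[of _ "\<lambda>_. 0"]) simp
next
  case (zgen_add a b)
  then obtain p1 q1 p2 q2 where
    "a = (\<Sum>g\<in>G. zmult (p1 g) g) - (\<Sum>g\<in>G. zmult (q1 g) g)"
    "b = (\<Sum>g\<in>G. zmult (p2 g) g) - (\<Sum>g\<in>G. zmult (q2 g) g)" by blast
  moreover have "(\<Sum>g\<in>G. zmult (r1 g + r2 g) g) =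
      (\<Sum>g\<in>G. zmult (r1 g) g) + (\<Sum>g\<in>G. zmult (r2 g) g)" for r1 r2
    by (simp add: zmult_add sum.distrib)
  ultimately show ?case
    by (intro exI[of _ "\<lambda>g. p1 g + p2 g"] exI[of _ "\<lambda>g. q1 g + q2 g"])
       (simp only:, simp add: algebra_simps)
next
  case (zgen_neg a)
  then obtain p q where "a = (\<Sum>g\<in>G. zmult (p g) g) - (\<Sum>g\<in>G. zmult (q g) g)" by blast
  then show ?case by (intro exI[of _ q] exI[of _ p]) simp
qed

lemma sum_zmult_mod_diff:
  assumes A: "zsubgroup A" and mA: "\<And>x. zmult m x \<in> A"
  shows "(\<Sum>g\<in>G. zmult (r g) g) - (\<Sum>g\<in>G. zmult (r g mod m) g) \<in> A"
proof -
  have "zmult (r g) g - zmult (r g mod m) g = zmult m (zmult (r g div m) g)" for g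
  proof -
    have "zmult (r g) g = zmult (m * (r g div m) + r g mod m) g" by simp
    then show ?thesis by (simp only: zmult_add zmult_mult) simp
  qed
  then show ?thesis
    by (simp add: sum_subtractf[symmetric] zsubgroup_sum[OF A] mA)
qed

text \<open>Modulo \<open>A\<close>, every element is a combination of the generators with coefficients below \<open>m\<close>.\<close>

lemma finite_index_if_uniform_exponent:
  assumes fg: "fin_gen_group TYPE('a::ab_group_add)" and A: "zsubgroup (A :: 'a set)"
    and m: "m > 0" and mA: "\<And>x. zmult m x \<in> A"
  shows "finite (cosets_in UNIV A)"
proof -
  obtain G :: "'a set" where G: "finite G" "zgen G = UNIV"
    using fg unfolding fin_gen_group_def by blast
  define S where "S p = (\<Sum>g\<in>G. zmult (p g) g)" for p
  define P where "P = Pi\<^sub>E G (\<lambda>_. {..<m})"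
  have reduce: "S p - S (restrict (\<lambda>g. p g mod m) G) \<in> A" for p
    using sum_zmult_mod_diff[OF A mA, of p G] unfolding S_def by (simp cong: sum.cong)
  have "cosets_in UNIV A \<subseteq> (\<lambda>(p, q). (+) (S p - S q) ` A) ` (P \<times> P)"
  proof
    fix C assume "C \<in> cosets_in UNIV A"
    then obtain x where C: "C = (+) x ` A" unfolding cosets_in_def by blast
    obtain p q where x: "x = S p - S q"
      using zgen_sum_rep[OF G(1), of x] G(2) unfolding S_def by blast
    define p' where "p' = restrict (\<lambda>g. p g mod m) G"
    define q' where "q' = restrict (\<lambda>g. q g mod m) G"
    have "S p - S p' \<in> A" "S q - S q' \<in> A"
      using reduce unfolding p'_def q'_def by blast+
    then have "(S p - S p') - (S q - S q') \<in> A" by (rule zsubgroup_diff[OF A])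
    moreover have "x - (S p' - S q') = (S p - S p') - (S q - S q')" using x by simp
    ultimately have "x - (S p' - S q') \<in> A" by (simp only:)
    then have "C = (+) (S p' - S q') ` A" using C by (simp add: coset_eq_iff[OF A])
    moreover have "p' \<in> P" "q' \<in> P" unfolding p'_def q'_def P_def using m by auto
    ultimately show "C \<in> (\<lambda>(p, q). (+) (S p - S q) ` A) ` (P \<times> P)" by blast
  qed
  moreover have "finite P" unfolding P_def using G by (simp add: finite_PiE)
  ultimately show ?thesis by (meson finite_SigmaI finite_imageI finite_subset)
qed

subsection \<open>Saturated subgroups and liftings\<close>

definition saturated :: "'a::ab_group_add set \<Rightarrow> bool" where
  "saturated S \<longleftrightarrow> (\<forall>n>0. \<forall>x. zmult n x \<in> S \<longrightarrow> x \<in> S)"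

text \<open>The abstract form of \<open>lifting\<close>: \<open>L\<close> is a lifting of \<open>A = L \<inter> S\<close>.\<close>

definition lattice_lifting :: "'a::ab_group_add set \<Rightarrow> 'a set \<Rightarrow> 'a set \<Rightarrow> bool" where
  "lattice_lifting S A L \<longleftrightarrow>
     zsubgroup L \<and> torsion_free L \<and> finite (cosets_in UNIV L) \<and> A = L \<inter> S"

lemma lifting_iff_lattice_lifting:
  "lifting \<rho> Fl \<sigma> L \<longleftrightarrow> lattice_lifting (in_N \<rho> (span \<sigma>)) (Fl \<sigma>) L"
  by (simp add: lifting_def lattice_lifting_def)

lemma saturated_in_N_span:
  assumes "Modules.additive (\<rho> :: 'a::ab_group_add \<Rightarrow> 'v::real_vector)"
  shows "saturated (in_N \<rho> (span X))"
  unfolding saturated_def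
proof (intro allI impI)
  fix n :: nat and x assume "n > 0" "zmult n x \<in> in_N \<rho> (span X)"
  then have "real n *\<^sub>R \<rho> x \<in> span X"
    by (simp add: in_N_def additive_zmult_scaleR[OF assms])
  then have "inverse (real n) *\<^sub>R (real n *\<^sub>R \<rho> x) \<in> span X" by (rule span_mul)
  with \<open>n > 0\<close> show "x \<in> in_N \<rho> (span X)" by (simp add: in_N_def)
qed

lemma zsubgroup_in_N_span: "Modules.additive \<rho> \<Longrightarrow> zsubgroup (in_N \<rho> (span X))"
  unfolding zsubgroup_def in_N_def
  by (auto simp: additive.add additive.zero additive.minus span_add span_neg span_zero)

lemma torsion_free_if_inter_saturated:
  assumes "torsion_free (L \<inter> S)" "saturated S" "0 \<in> S"
  shows "torsion_free L"
  using assms unfolding torsion_free_def saturated_def by (metis IntI)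

lemma tor_mod_subset_saturated:
  "A \<subseteq> S \<Longrightarrow> saturated S \<Longrightarrow> tor_mod A \<subseteq> S"
  unfolding tor_mod_def saturated_def by blast

lemma tor_mod_diff:
  assumes A: "zsubgroup A" and "x \<in> tor_mod A" "y \<in> tor_mod A"
  shows "x - y \<in> tor_mod A"
proof -
  obtain a b where ab: "a > 0" "zmult a x \<in> A" "b > 0" "zmult b y \<in> A"
    using assms(2,3) unfolding tor_mod_def by auto
  have "zmult b (zmult a x) - zmult a (zmult b y) \<in> A"
    by (rule zsubgroup_diff[OF A zsubgroup_zmult[OF A ab(2)] zsubgroup_zmult[OF A ab(4)]])
  moreover have "zmult (a * b) (x - y) = zmult b (zmult a x) - zmult a (zmult b y)"
    by (simp add: zmult_diff mult.commute flip: zmult_mult)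
  ultimately have "zmult (a * b) (x - y) \<in> A" by simp
  moreover have "a * b > 0" using ab by simp
  ultimately show ?thesis unfolding tor_mod_def by blast
qed

lemma tor_mod_eq_saturated:
  assumes A: "zsubgroup A" "A \<subseteq> S" "finite (cosets_in S A)" and S: "zsubgroup S" "saturated S"
  shows "tor_mod A = S"
proof
  show "tor_mod A \<subseteq> S" using tor_mod_subset_saturated A(2) S(2) .
  obtain m where "m > 0" "\<forall>x\<in>S. zmult m x \<in> A"
    using finite_index_uniform_exponent[OF A(1,3) S(1)] by blast
  then show "S \<subseteq> tor_mod A" unfolding tor_mod_def by blast
qed

lemma lattice_lifting_vimage:
  assumes fg: "fin_gen_group TYPE('a::ab_group_add)" and f: "Modules.additive (f :: 'a \<Rightarrow> 'b::ab_group_add)"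
    and S: "saturated S" "0 \<in> S" and A: "torsion_free A" "A = f -` L' \<inter> S"
    and L': "zsubgroup L'" "finite (cosets_in UNIV L')"
  shows "lattice_lifting S A (f -` L')"
  unfolding lattice_lifting_def
proof (intro conjI)
  show "zsubgroup (f -` L')" using zsubgroup_vimage[OF f L'(1)] .
  show "torsion_free (f -` L')" using torsion_free_if_inter_saturated S A by metis
  obtain m where m: "m > 0" "\<forall>y\<in>UNIV. zmult m y \<in> L'"
    using finite_index_uniform_exponent[OF L' zsubgroup_UNIV] by blast
  show "finite (cosets_in UNIV (f -` L'))"
    by (rule finite_index_if_uniform_exponent[OF fg zsubgroup_vimage[OF f L'(1)] m(1)])
      (simp add: additive_zmult[OF f] m(2))
qed (use A in simp)

definition add_multiples :: "'a::ab_group_add set \<Rightarrow> nat \<Rightarrow> 'a set" where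
  "add_multiples A m = {a + zmult m x | a x. a \<in> A}"

lemma zsubgroup_add_multiples:
  assumes A: "zsubgroup A"
  shows "zsubgroup (add_multiples A m)"
  unfolding zsubgroup_def add_multiples_def
proof (intro conjI ballI)
  have "(0::'a) = 0 + zmult m 0" by simp
  then show "0 \<in> {a + zmult m x | a x. a \<in> A}" using zsubgroup_zero[OF A] by blast
next
  fix u v assume "u \<in> {a + zmult m x | a x. a \<in> A}" "v \<in> {a + zmult m x | a x. a \<in> A}"
  then obtain a x b y where "a \<in> A" "b \<in> A" "u = a + zmult m x" "v = b + zmult m y" by blast
  moreover have "u + v = (a + b) + zmult m (x + y)" if "u = a + zmult m x" "v = b + zmult m y"
    using that by (simp add: zmult_plus algebra_simps)
  ultimately show "u + v \<in> {a + zmult m x | a x. a \<in> A}" using zsubgroup_add[OF A] by blast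
next
  fix u assume "u \<in> {a + zmult m x | a x. a \<in> A}"
  then obtain a x where "a \<in> A" "u = a + zmult m x" by blast
  then have "- a \<in> A" "- u = - a + zmult m (- x)" using zsubgroup_minus[OF A] by (auto simp: zmult_minus)
  then show "- u \<in> {a + zmult m x | a x. a \<in> A}" by blast
qed

lemma add_multiples_inter_saturated:
  assumes A: "zsubgroup A" "A \<subseteq> S" and S: "zsubgroup S" "saturated S"
    and m: "m > 0" "\<forall>x\<in>S. zmult m x \<in> A"
  shows "add_multiples A m \<inter> S = A"
proof
  show "A \<subseteq> add_multiples A m \<inter> S"
  proof
    fix a assume "a \<in> A"
    moreover have "a = a + zmult m 0" by simp
    ultimately show "a \<in> add_multiples A m \<inter> S" using A(2) unfolding add_multiples_def by blast
  qed
  show "add_multiples A m \<inter> S \<subseteq> A"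
  proof
    fix z assume z: "z \<in> add_multiples A m \<inter> S"
    then obtain a x where ax: "a \<in> A" "z = a + zmult m x" unfolding add_multiples_def by blast
    then have "zmult m x \<in> S" using zsubgroup_diff[OF S(1), of z a] z A(2) by auto
    then have "zmult m x \<in> A" using S(2) m unfolding saturated_def by blast
    then show "z \<in> A" using ax zsubgroup_add[OF A(1)] by blast
  qed
qed

subsection \<open>The four parts, for a subgroup of finite index in a saturated subgroup\<close>

lemma exists_lattice_lifting_into:
  assumes fg: "fin_gen_group TYPE('a::ab_group_add)" and f: "Modules.additive (f :: 'a \<Rightarrow> 'b::ab_group_add)"
    and A: "zsubgroup A" "torsion_free A" "A \<subseteq> S" "finite (cosets_in S A)"
    and S: "zsubgroup S" "saturated S"
    and L': "zsubgroup L'" "finite (cosets_in UNIV L')" and fA: "f ` A \<subseteq> L'"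
  shows "\<exists>L. lattice_lifting S A L \<and> f ` L \<subseteq> L'"
proof -
  obtain m1 where m1: "m1 > 0" "\<forall>x\<in>S. zmult m1 x \<in> A"
    using finite_index_uniform_exponent[OF A(1,4) S(1)] by blast
  obtain m2 where m2: "m2 > 0" "\<forall>y\<in>UNIV. zmult m2 y \<in> L'"
    using finite_index_uniform_exponent[OF L' zsubgroup_UNIV] by blast
  define m where "m = m2 * m1"
  define L where "L = add_multiples A m"
  have m: "m > 0" "\<forall>x\<in>S. zmult m x \<in> A"
    using m1 m2 zsubgroup_zmult[OF A(1)] by (auto simp: m_def zmult_mult)
  have mL': "f (zmult m x) \<in> L'" for x
    using m2 zsubgroup_zmult[OF L'(1)]
    by (simp add: m_def mult.commute[of m2] zmult_mult additive_zmult[OF f])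
  have "zsubgroup L" unfolding L_def by (rule zsubgroup_add_multiples[OF A(1)])
  moreover have LS: "L \<inter> S = A" unfolding L_def by (rule add_multiples_inter_saturated[OF A(1,3) S m])
  moreover have "zmult m x \<in> L" for x
    unfolding L_def add_multiples_def using zsubgroup_zero[OF A(1)] by force
  moreover have "torsion_free L"
    using torsion_free_if_inter_saturated LS A(2) S zsubgroup_zero by metis
  ultimately have "lattice_lifting S A L"
    using finite_index_if_uniform_exponent[OF fg _ m(1)] unfolding lattice_lifting_def by blast
  moreover have "f ` L \<subseteq> L'"
    using fA mL' zsubgroup_add[OF L'(1)]
    unfolding L_def add_multiples_def by (auto simp: additive.add[OF f])
  ultimately show ?thesis by blast
qed

lemma tor_quot_inj_if_bij:
  assumes f: "Modules.additive f" and A: "zsubgroup A"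
    and inj: "inj_on f torsion_part" and bij: "bij_betw f A B"
  shows "tor_quot_inj f A B"
  unfolding tor_quot_inj_def
proof (intro ballI impI)
  fix x y assume xy: "x \<in> tor_mod A" "y \<in> tor_mod A" "f x - f y \<in> B"
  define z where "z = x - y"
  obtain k where k: "k > 0" "zmult k z \<in> A"
    using tor_mod_diff[OF A xy(1,2)] unfolding z_def tor_mod_def by blast
  have "f z \<in> B" using xy(3) by (simp add: z_def additive.diff[OF f])
  then obtain a where a: "a \<in> A" "f a = f z" using bij unfolding bij_betw_def by (metis imageE)
  have fza: "f (z - a) = f 0" using a by (simp add: additive.diff[OF f] additive.zero[OF f])
  have "zmult k (z - a) \<in> A"
    using k a zsubgroup_zmult[OF A] zsubgroup_diff[OF A] by (simp add: zmult_diff)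
  moreover have "f (zmult k (z - a)) = f 0"
    using fza by (simp add: additive_zmult[OF f] additive.zero[OF f])
  ultimately have "zmult k (z - a) = 0"
    using bij zsubgroup_zero[OF A] unfolding bij_betw_def inj_on_def by blast
  then have "z - a \<in> torsion_part" "(0::'a) \<in> torsion_part"
    using k unfolding torsion_part_def by (auto intro: exI[of _ 1])
  then have "z - a = 0" using inj_onD[OF inj fza] by blast
  then have "z = a" by simp
  with a show "x - y \<in> A" unfolding z_def by simp
qed

text \<open>Here \<open>B = L' \<inter> S'\<close> plays the role of \<open>F'\<^sub>\<tau>\<close>, and \<open>f\<close> maps \<open>S\<close> into \<open>S'\<close>.\<close>

lemma lattice_lifting_vimage_if_tor_quot_inj:
  assumes fg: "fin_gen_group TYPE('a::ab_group_add)" and f: "Modules.additive (f :: 'a \<Rightarrow> 'b::ab_group_add)"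
    and A: "zsubgroup A" "torsion_free A" "A \<subseteq> S" "finite (cosets_in S A)"
    and S: "zsubgroup S" "saturated S" and fS: "f ` S \<subseteq> S'"
    and L': "zsubgroup L'" "finite (cosets_in UNIV L')" "B = L' \<inter> S'" and fA: "f ` A \<subseteq> B"
    and inj: "tor_quot_inj f A B"
  shows "lattice_lifting S A (f -` L') \<and> quot_inj f (f -` L') L'"
proof
  have "f -` L' \<inter> S \<subseteq> A"
  proof
    fix x assume x: "x \<in> f -` L' \<inter> S"
    then have "x \<in> tor_mod A" "f x - f 0 \<in> B"
      using tor_mod_eq_saturated[OF A(1,3,4) S] fS L'(3) by (auto simp: additive.zero[OF f])
    moreover have "0 \<in> tor_mod A" using tor_mod_eq_saturated[OF A(1,3,4) S] zsubgroup_zero[OF S(1)] by simp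
    ultimately show "x \<in> A" using inj unfolding tor_quot_inj_def by force
  qed
  then have "A = f -` L' \<inter> S" using fA A(3) L'(3) by blast
  then show "lattice_lifting S A (f -` L')"
    using lattice_lifting_vimage[OF fg f S(2) zsubgroup_zero[OF S(1)] A(2) _ L'(1,2)] by blast
  show "quot_inj f (f -` L') L'" unfolding quot_inj_def by (simp add: additive.diff[OF f])
qed

lemma tor_quot_inj_if_quot_inj:
  assumes S: "zsubgroup S" "saturated S" and L: "A = L \<inter> S" and B: "B \<subseteq> L'"
    and inj: "quot_inj f L L'"
  shows "tor_quot_inj f A B"
  unfolding tor_quot_inj_def
proof (intro ballI impI)
  fix x y assume xy: "x \<in> tor_mod A" "y \<in> tor_mod A" "f x - f y \<in> B"
  have "tor_mod A \<subseteq> S" using tor_mod_subset_saturated L S(2) by blast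
  then have "x - y \<in> S" using xy zsubgroup_diff[OF S(1)] by blast
  moreover have "x - y \<in> L" using inj xy(3) B unfolding quot_inj_def by blast
  ultimately show "x - y \<in> A" using L by blast
qed

lemma km_morphism_maps_span:
  assumes "km_morphism \<rho> F Fl \<rho>' F' Fl' f fR" and "fR ` \<sigma> \<subseteq> \<tau>"
  shows "f ` in_N \<rho> (span \<sigma>) \<subseteq> in_N \<rho>' (span \<tau>)"
proof
  fix y assume "y \<in> f ` in_N \<rho> (span \<sigma>)"
  then obtain x where x: "\<rho> x \<in> span \<sigma>" "y = f x" unfolding in_N_def by blast
  have lin: "linear fR" and comm: "fR (\<rho> x) = \<rho>' (f x)"
    using assms(1) unfolding km_morphism_def by auto
  have "\<rho>' y \<in> fR ` span \<sigma>" using x comm by (metis imageI)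
  also have "\<dots> = span (fR ` \<sigma>)" using lin by (simp add: span_linear_image)
  also have "\<dots> \<subseteq> span \<tau>" using assms(2) by (rule span_mono)
  finally show "y \<in> in_N \<rho>' (span \<tau>)" by (simp add: in_N_def)
qed

text \<open>The morphism axiom only provides some \<open>\<tau>\<^sub>0 \<supseteq> f\<^sub>\<real>(\<sigma>)\<close> with \<open>f(F\<^sub>\<sigma>) \<subseteq> F'\<^sub>\<tau>\<^sub>0\<close>; pass through
  the common face \<open>\<tau> \<inter> \<tau>\<^sub>0\<close>, on which both lattice data restrict to the same lattice.\<close>

lemma km_morphism_maps_lattice:
  assumes km: "km_fan \<rho> F Fl" and km': "km_fan \<rho>' F' Fl'"
    and mor: "km_morphism \<rho> F Fl \<rho>' F' Fl' f fR"
    and \<sigma>: "\<sigma> \<in> F" and \<tau>: "\<tau> \<in> F'" "fR ` \<sigma> \<subseteq> \<tau>"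
  shows "f ` Fl \<sigma> \<subseteq> Fl' \<tau>"
proof -
  obtain \<tau>0 where \<tau>0: "\<tau>0 \<in> F'" "fR ` \<sigma> \<subseteq> \<tau>0" "f ` Fl \<sigma> \<subseteq> Fl' \<tau>0"
    using mor \<sigma> unfolding km_morphism_def by blast
  have fan: "is_fan \<rho>' F'" using km' unfolding km_fan_def by simp
  have faces: "is_face (\<tau> \<inter> \<tau>0) \<tau>" "is_face (\<tau> \<inter> \<tau>0) \<tau>0"
    using fan \<tau>0(1) \<tau>(1) unfolding is_fan_def by auto
  then have "\<tau> \<inter> \<tau>0 \<in> F'" using fan \<tau>(1) unfolding is_fan_def by blast
  then have restrict: "Fl' (\<tau> \<inter> \<tau>0) = Fl' \<tau> \<inter> in_N \<rho>' (span (\<tau> \<inter> \<tau>0))"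
      "Fl' (\<tau> \<inter> \<tau>0) = Fl' \<tau>0 \<inter> in_N \<rho>' (span (\<tau> \<inter> \<tau>0))"
    using km' faces \<tau>(1) \<tau>0(1) unfolding km_fan_def by blast+
  have "Fl \<sigma> \<subseteq> in_N \<rho> (span \<sigma>)" using km \<sigma> unfolding km_fan_def by blast
  then have "f ` Fl \<sigma> \<subseteq> in_N \<rho>' (span (\<tau> \<inter> \<tau>0))"
    using km_morphism_maps_span[OF mor, of \<sigma> "\<tau> \<inter> \<tau>0"] \<tau>(2) \<tau>0(2) by blast
  then show ?thesis using \<tau>0(3) restrict by blast
qed

theorem lemma2p5p6:
  fixes \<rho> :: "'a::ab_group_add \<Rightarrow> 'v::real_vector"
    and \<rho>' :: "'b::ab_group_add \<Rightarrow> 'w::real_vector"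
    and F :: "'v set set" and Fl :: "'v set \<Rightarrow> 'a set"
    and F' :: "'w set set" and Fl' :: "'w set \<Rightarrow> 'b set"
    and f :: "'a \<Rightarrow> 'b" and fR :: "'v \<Rightarrow> 'w"
  assumes "km_fan \<rho> F Fl" and "km_fan \<rho>' F' Fl'"
    and "km_morphism \<rho> F Fl \<rho>' F' Fl' f fR"
    and "\<sigma> \<in> F" and "\<tau> \<in> F'" and "fR ` \<sigma> \<subseteq> \<tau>"
    and "lifting \<rho>' Fl' \<tau> L'"
  shows "(\<exists>L. lifting \<rho> Fl \<sigma> L \<and> f ` L \<subseteq> L')
    \<and> (inj_on f (torsion_part :: 'a set) \<and> bij_betw f (Fl \<sigma>) (Fl' \<tau>)
           \<longrightarrow> tor_quot_inj f (Fl \<sigma>) (Fl' \<tau>))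
    \<and> (tor_quot_inj f (Fl \<sigma>) (Fl' \<tau>)
           \<longrightarrow> lifting \<rho> Fl \<sigma> (f -` L') \<and> quot_inj f (f -` L') L')
    \<and> ((\<exists>L. lifting \<rho> Fl \<sigma> L \<and> f ` L \<subseteq> L' \<and> quot_inj f L L')
           \<longrightarrow> tor_quot_inj f (Fl \<sigma>) (Fl' \<tau>))"
proof -
  have fg: "fin_gen_group TYPE('a)" and "Modules.additive \<rho>"
    and A: "zsubgroup (Fl \<sigma>)" "torsion_free (Fl \<sigma>)" "Fl \<sigma> \<subseteq> in_N \<rho> (span \<sigma>)"
      "finite (cosets_in (in_N \<rho> (span \<sigma>)) (Fl \<sigma>))"
    using assms(1,4) unfolding km_fan_def realification_def by auto
  then have S: "zsubgroup (in_N \<rho> (span \<sigma>))" "saturated (in_N \<rho> (span \<sigma>))"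
    using zsubgroup_in_N_span saturated_in_N_span by blast+
  have f: "Modules.additive f" using assms(3) unfolding km_morphism_def by simp
  have fS: "f ` in_N \<rho> (span \<sigma>) \<subseteq> in_N \<rho>' (span \<tau>)"
    using km_morphism_maps_span[OF assms(3,6)] .
  have fA: "f ` Fl \<sigma> \<subseteq> Fl' \<tau>" using km_morphism_maps_lattice[OF assms(1-6)] .
  have L': "zsubgroup L'" "finite (cosets_in UNIV L')" "Fl' \<tau> = L' \<inter> in_N \<rho>' (span \<tau>)"
    using assms(7) unfolding lifting_def by auto
  have "f ` Fl \<sigma> \<subseteq> L'" using fA L'(3) by blast
  then have "\<exists>L. lattice_lifting (in_N \<rho> (span \<sigma>)) (Fl \<sigma>) L \<and> f ` L \<subseteq> L'"
    by (rule exists_lattice_lifting_into[OF fg f A S L'(1,2)])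
  moreover have "tor_quot_inj f (Fl \<sigma>) (Fl' \<tau>)"
    if "lattice_lifting (in_N \<rho> (span \<sigma>)) (Fl \<sigma>) L" "quot_inj f L L'" for L
    using tor_quot_inj_if_quot_inj[OF S _ _ that(2)] that(1) L'(3)
    unfolding lattice_lifting_def by blast
  ultimately show ?thesis
    unfolding lifting_iff_lattice_lifting
    using tor_quot_inj_if_bij[OF f A(1)] lattice_lifting_vimage_if_tor_quot_inj[OF fg f A S fS L' fA]
    by blast
qed

end
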